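(* Let $k\ge 0$ be an integer and let $\mathcal{H}$ be a family of $n$ half-circles in the circle $\mathbb{S}^1$ with $n > 3k$. Then $\mathcal{H}$ contains at most $k+1$ different $k$-cliques.
   Context: A half-circle of $\mathbb{S}^1$ is an arc of $\mathbb{S}^1$ consisting of half of the circle (a semicircle). A subset $J$ of $k$ half-circles from $\mathcal{H}$ is a $k$-clique if there is a point $p\in\mathbb{S}^1$ that lies in all half-circles of $J$ but in no half-circle of $\mathcal{H}\setminus J$. *)

theory Defs
  imports "HOL-Analysis.Analysis"
begin

text \<open>The circle S^1 is modelled as the unit circle in the complex plane.
  A half-circle is a closed semicircle: the points of S^1 having non-negative
  inner product with some unit vector u.\<close>

definition half_circle :: "complex set \<Rightarrow> bool" where
  "half_circle S \<longleftrightarrow> (\<exists>u. norm u = 1 \<and> S = {p \<in> sphere 0 1. p \<bullet> u \<ge> 0})"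

definition is_clique :: "nat \<Rightarrow> complex set set \<Rightarrow> complex set set \<Rightarrow> bool" where
  "is_clique k H J \<longleftrightarrow> J \<subseteq> H \<and> card J = k \<and>
     (\<exists>p \<in> sphere 0 1. (\<forall>S\<in>J. p \<in> S) \<and> (\<forall>S\<in>H - J. p \<notin> S))"

end

theory Submission
  imports Defs
begin

text \<open>Pick a witness point for every k-clique. Since \<open>3k < n\<close>, any three cliques miss a common
  half-circle of H, so their witnesses lie in the open complementary half-circle; by Helly's theorem
  in the plane all witnesses then lie in one open half-circle. Parametrised by the slope along it,
  every half-circle of H becomes a ray, so as the slope increases each member of H either only
  enters or only leaves the cliques. A family of k-sets with this property is determined by the
  number of entering elements each set contains, which leaves at most \<open>k + 1\<close> sets.\<close>

lemma Helly_finite: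
  fixes \<F> :: "'a::euclidean_space set set"
  assumes "finite \<F>" and "\<forall>S\<in>\<F>. convex S"
    and "\<And>\<T>. \<T> \<subseteq> \<F> \<Longrightarrow> card \<T> \<le> DIM('a) + 1 \<Longrightarrow> \<Inter>\<T> \<noteq> {}"
  shows "\<Inter>\<F> \<noteq> {}"
proof (cases "card \<F> \<ge> DIM('a) + 1")
  case True
  then show ?thesis using assms(2,3) by (rule Helly) auto
next
  case False
  then show ?thesis using assms(3)[of \<F>] by simp
qed

lemma open_halfspaces_Helly:
  fixes p :: "'i \<Rightarrow> 'a::euclidean_space"
  assumes "finite I"
    and "\<And>T. T \<subseteq> I \<Longrightarrow> card T \<le> DIM('a) + 1 \<Longrightarrow> \<exists>w. \<forall>i\<in>T. p i \<bullet> w > 0"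
  shows "\<exists>w. \<forall>i\<in>I. p i \<bullet> w > 0"
proof -
  define halfspace where "halfspace i = {w. p i \<bullet> w > 0}" for i
  have "\<Inter>(halfspace ` I) \<noteq> {}"
  proof (rule Helly_finite)
    fix \<T> assume "\<T> \<subseteq> halfspace ` I" and card: "card \<T> \<le> DIM('a) + 1"
    then obtain T where T: "T \<subseteq> I" "inj_on halfspace T" "\<T> = halfspace ` T"
      by (auto simp: subset_image_inj)
    with card have "card T \<le> DIM('a) + 1" by (simp add: card_image)
    then obtain w where "\<forall>i\<in>T. p i \<bullet> w > 0"
      using assms(2) T(1) by blast
    then have "w \<in> \<Inter>\<T>" by (simp add: T(3) halfspace_def)
    then show "\<Inter>\<T> \<noteq> {}" by blast
  qed (use assms(1) convex_halfspace_gt in \<open>auto simp: halfspace_def\<close>)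
  then show ?thesis by (auto simp: halfspace_def)
qed

lemma card_le_Suc_if_membership_monotone:
  fixes \<F> :: "'a set set" and r :: "'a set \<Rightarrow> 'b::linorder"
  assumes fin: "\<And>J. J \<in> \<F> \<Longrightarrow> finite J" and card: "\<And>J. J \<in> \<F> \<Longrightarrow> card J = k"
    and monotone: "\<And>x. \<exists>Q. (mono Q \<or> antimono Q) \<and> (\<forall>J\<in>\<F>. x \<in> J \<longleftrightarrow> Q (r J))"
  shows "card \<F> \<le> k + 1"
proof -
  define U where "U = {x. \<exists>Q. mono Q \<and> (\<forall>J\<in>\<F>. x \<in> J \<longleftrightarrow> Q (r J))}"
  have grow: "J \<inter> U \<subseteq> J' \<inter> U" and shrink: "J' - U \<subseteq> J - U"
    if "J \<in> \<F>" "J' \<in> \<F>" "r J \<le> r J'" for J J'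
  proof -
    show "J \<inter> U \<subseteq> J' \<inter> U"
    proof
      fix x assume x: "x \<in> J \<inter> U"
      then obtain Q where mono: "mono Q" and Q: "\<forall>J\<in>\<F>. x \<in> J \<longleftrightarrow> Q (r J)"
        by (auto simp: U_def)
      have "Q (r J) \<le> Q (r J')" using mono that(3) by (rule monoD)
      with x Q that(1,2) show "x \<in> J' \<inter> U" by auto
    qed
    show "J' - U \<subseteq> J - U"
    proof
      fix x assume x: "x \<in> J' - U"
      with monotone[of x] obtain Q where antimono: "antimono Q" and Q: "\<forall>J\<in>\<F>. x \<in> J \<longleftrightarrow> Q (r J)"
        by (auto simp: U_def)
      have "Q (r J') \<le> Q (r J)" using antimono that(3) by (rule antimonoD)
      with x Q that(1,2) show "x \<in> J - U" by auto
    qed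
  qed
  have eq: "J = J'" if "J \<in> \<F>" "J' \<in> \<F>" "r J \<le> r J'" "card (J \<inter> U) = card (J' \<inter> U)" for J J'
  proof -
    have "J \<inter> U = J' \<inter> U"
      using grow[OF that(1-3)] that(2,4) fin by (intro card_subset_eq) auto
    moreover have "card (J' - U) = card (J - U)"
      using that(1,2,4) card fin by (simp add: card_Diff_subset_Int)
    then have "J' - U = J - U"
      using shrink[OF that(1-3)] that(1) fin by (intro card_subset_eq) auto
    ultimately show ?thesis by blast
  qed
  have "inj_on (\<lambda>J. card (J \<inter> U)) \<F>"
  proof (rule inj_onI)
    fix J J' assume "J \<in> \<F>" "J' \<in> \<F>" "card (J \<inter> U) = card (J' \<inter> U)"
    then show "J = J'" using eq[of J J'] eq[of J' J] le_cases[of "r J" "r J'"] by argo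
  qed
  moreover have "(\<lambda>J. card (J \<inter> U)) ` \<F> \<subseteq> {..k}"
    using card fin card_mono[OF _ Int_lower1] by fastforce
  ultimately have "card \<F> \<le> card {..k}"
    by (rule card_inj_on_le) simp
  then show ?thesis by simp
qed

text \<open>The tangent of the angle from \<open>w\<close> to \<open>q\<close>, a coordinate on the open half-circle facing \<open>w\<close>.\<close>

definition slope :: "complex \<Rightarrow> complex \<Rightarrow> real" where
  "slope w q = (q \<bullet> (\<i> * w)) / (q \<bullet> w)"

lemma inner_nonneg_iff_slope:
  fixes q u w :: complex
  assumes "q \<bullet> w > 0"
  shows "q \<bullet> u \<ge> 0 \<longleftrightarrow> u \<bullet> w + (u \<bullet> (\<i> * w)) * slope w q \<ge> 0"
proof -
  have "w \<noteq> 0" using assms by auto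
  have decompose: "(q \<bullet> u) * (cmod w)\<^sup>2 = (u \<bullet> w) * (q \<bullet> w) + (u \<bullet> (\<i> * w)) * (q \<bullet> (\<i> * w))"
    unfolding inner_complex_def cmod_power2 by (simp add: algebra_simps power2_eq_square)
  have "q \<bullet> u \<ge> 0 \<longleftrightarrow> (q \<bullet> u) * (cmod w)\<^sup>2 \<ge> 0"
    using \<open>w \<noteq> 0\<close> by (simp add: zero_le_mult_iff)
  also have "\<dots> \<longleftrightarrow> (u \<bullet> w + (u \<bullet> (\<i> * w)) * slope w q) * (q \<bullet> w) \<ge> 0"
    using assms by (simp add: decompose slope_def algebra_simps)
  also have "\<dots> \<longleftrightarrow> u \<bullet> w + (u \<bullet> (\<i> * w)) * slope w q \<ge> 0"
    using assms by (simp add: zero_le_mult_iff)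
  finally show ?thesis .
qed

lemma half_circle_monotone_in_slope:
  assumes "half_circle S"
  obtains Q :: "real \<Rightarrow> bool"
  where "mono Q \<or> antimono Q"
    and "\<And>q. q \<in> sphere 0 1 \<Longrightarrow> q \<bullet> w > 0 \<Longrightarrow> q \<in> S \<longleftrightarrow> Q (slope w q)"
proof -
  obtain u where S: "S = {q \<in> sphere 0 1. q \<bullet> u \<ge> 0}"
    using assms by (auto simp: half_circle_def)
  define Q where "Q t \<longleftrightarrow> 0 \<le> u \<bullet> w + (u \<bullet> (\<i> * w)) * t" for t
  have "mono Q \<or> antimono Q"
  proof (cases "u \<bullet> (\<i> * w) \<ge> 0")
    case True
    then have "mono Q"
      by (intro monoI le_boolI) (smt (verit) Q_def mult_left_mono)
    then show ?thesis ..
  next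
    case False
    then have "antimono Q"
      by (intro antimonoI le_boolI) (smt (verit) Q_def mult_left_mono_neg)
    then show ?thesis ..
  qed
  moreover have "q \<in> S \<longleftrightarrow> Q (slope w q)" if "q \<in> sphere 0 1" "q \<bullet> w > 0" for q
    using that by (simp add: S Q_def inner_nonneg_iff_slope)
  ultimately show ?thesis using that by blast
qed

lemma ex_not_in_Union_if_card_less:
  assumes "finite H" and "\<And>J. J \<in> \<C> \<Longrightarrow> J \<subseteq> H" and "\<And>J. J \<in> \<C> \<Longrightarrow> card J = k"
    and "card \<C> * k < card H"
  shows "\<exists>S\<in>H. \<forall>J\<in>\<C>. S \<notin> J"
proof -
  have "finite (\<Union>\<C>)"
    using assms(1,2) by (meson Union_least finite_subset)
  moreover have "card (\<Union>\<C>) < card H"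
    using card_Union_le_sum_card[of \<C>] assms(3,4) by simp
  ultimately have "\<not> H \<subseteq> \<Union>\<C>"
    using card_mono leD by blast
  then show ?thesis by blast
qed

lemma is_clique_subset: "is_clique k H J \<Longrightarrow> J \<subseteq> H"
  and is_clique_card: "is_clique k H J \<Longrightarrow> card J = k"
  by (simp_all add: is_clique_def)

lemma finite_cliques: "finite H \<Longrightarrow> finite {J. is_clique k H J}"
  by (rule finite_subset[of _ "Pow H"]) (auto dest: is_clique_subset)

lemma is_clique_witness:
  obtains p where "\<And>J. is_clique k H J \<Longrightarrow> p J \<in> sphere 0 1"
    and "\<And>J S. is_clique k H J \<Longrightarrow> S \<in> H \<Longrightarrow> S \<in> J \<longleftrightarrow> p J \<in> S"
proof -
  have "\<forall>J\<in>{J. is_clique k H J}. \<exists>p\<in>sphere 0 1. \<forall>S\<in>H. S \<in> J \<longleftrightarrow> p \<in> S"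
    unfolding is_clique_def by blast
  then obtain p where "\<forall>J\<in>{J. is_clique k H J}. p J \<in> sphere 0 1 \<and> (\<forall>S\<in>H. S \<in> J \<longleftrightarrow> p J \<in> S)"
    by (metis bchoice)
  then show ?thesis using that by blast
qed

lemma clique_witnesses_in_open_half_plane:
  assumes "finite H" and "\<forall>S\<in>H. half_circle S" and "3 * k < card H"
    and p_sphere: "\<And>J. is_clique k H J \<Longrightarrow> p J \<in> sphere 0 1"
    and p_witness: "\<And>J S. is_clique k H J \<Longrightarrow> S \<in> H \<Longrightarrow> S \<in> J \<longleftrightarrow> p J \<in> S"
  shows "\<exists>w. \<forall>J\<in>{J. is_clique k H J}. p J \<bullet> w > 0"
proof (rule open_halfspaces_Helly[OF finite_cliques[OF assms(1)]])
  fix \<T> assume \<T>: "\<T> \<subseteq> {J. is_clique k H J}" "card \<T> \<le> DIM(complex) + 1"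
  then have "card \<T> * k < card H"
    using assms(3) by (simp add: order_le_less_trans[OF mult_right_mono])
  then obtain S where "S \<in> H" and S_avoided: "\<forall>J\<in>\<T>. S \<notin> J"
    using \<T>(1) assms(1) ex_not_in_Union_if_card_less[of H \<T> k]
    by (auto dest: is_clique_subset is_clique_card)
  then obtain u where "S = {q \<in> sphere 0 1. q \<bullet> u \<ge> 0}"
    using assms(2) by (auto simp: half_circle_def)
  then have "p J \<bullet> (- u) > 0" if "J \<in> \<T>" for J
    using that \<T>(1) S_avoided p_sphere p_witness[OF _ \<open>S \<in> H\<close>] by fastforce
  then show "\<exists>w. \<forall>J\<in>\<T>. p J \<bullet> w > 0" by blast
qed

lemma clique_membership_monotone_in_slope:
  assumes "\<forall>S\<in>H. half_circle S"
    and p_sphere: "\<And>J. is_clique k H J \<Longrightarrow> p J \<in> sphere 0 1"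
    and p_witness: "\<And>J S. is_clique k H J \<Longrightarrow> S \<in> H \<Longrightarrow> S \<in> J \<longleftrightarrow> p J \<in> S"
    and w: "\<And>J. is_clique k H J \<Longrightarrow> p J \<bullet> w > 0"
  shows "\<exists>Q. (mono Q \<or> antimono Q) \<and> (\<forall>J\<in>{J. is_clique k H J}. S \<in> J \<longleftrightarrow> Q (slope w (p J)))"
proof (cases "S \<in> H")
  case True
  then obtain Q :: "real \<Rightarrow> bool" where "mono Q \<or> antimono Q"
    and "\<And>q. q \<in> sphere 0 1 \<Longrightarrow> q \<bullet> w > 0 \<Longrightarrow> q \<in> S \<longleftrightarrow> Q (slope w q)"
    using assms(1) half_circle_monotone_in_slope by metis
  then show ?thesis using True p_sphere p_witness w by blast
next
  case False
  then show ?thesis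
    by (intro exI[of _ "\<lambda>_. False"]) (auto simp: monoI dest: is_clique_subset)
qed

theorem lemma3:
  fixes k n :: nat and H :: "complex set set"
  assumes "finite H" and "card H = n" and "\<forall>S\<in>H. half_circle S" and "n > 3 * k"
  shows "card {J. is_clique k H J} \<le> k + 1"
proof -
  obtain p where p_sphere: "\<And>J. is_clique k H J \<Longrightarrow> p J \<in> sphere 0 1"
    and p_witness: "\<And>J S. is_clique k H J \<Longrightarrow> S \<in> H \<Longrightarrow> S \<in> J \<longleftrightarrow> p J \<in> S"
    using is_clique_witness by metis
  obtain w where w: "\<And>J. is_clique k H J \<Longrightarrow> p J \<bullet> w > 0"
    using clique_witnesses_in_open_half_plane[OF assms(1,3) _ p_sphere p_witness] assms(2,4)
    by auto
  show ?thesis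
  proof (rule card_le_Suc_if_membership_monotone[where r = "\<lambda>J. slope w (p J)"])
    show "\<exists>Q. (mono Q \<or> antimono Q) \<and> (\<forall>J\<in>{J. is_clique k H J}. S \<in> J \<longleftrightarrow> Q (slope w (p J)))"
      for S
      using clique_membership_monotone_in_slope[OF assms(3) p_sphere p_witness w] .
  qed (auto simp: is_clique_card finite_subset[OF is_clique_subset assms(1)])
qed

end
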